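(* Let $A:\mathbb R^n\rightrightarrows\mathbb R^n$ be maximally monotone, $F:\mathbb R^n\to\mathbb R^n$ $L$-Lipschitz ($L>0$), $T=A+F$, and assume there exist a nonempty $\mathcal S^\star\subseteq\operatorname{zer}T$ and $\rho\in(-\tfrac1{2L},\infty)$ with $\langle v,z-z^\star\rangle\ge\rho\|v\|^2$ for all $z^\star\in\mathcal S^\star$ and all $(z,v)\in\operatorname{graph}T$. Let $\gamma\in(\max\{0,-2\rho\},\tfrac1L]$, $\delta\in(-\tfrac\gamma2,\rho]$ and $\bar\alpha\in(0,1+\tfrac{2\delta}{\gamma})$, let $H=\mathrm{id}-\gamma F$, and for $z^0\in\mathbb R^n$ generate $$\bar z^k=(\mathrm{id}+\gamma A)^{-1}(z^k-\gamma Fz^k),\qquad z^{k+1}=z^k+\bar\alpha(H\bar z^k-Hz^k).$$ Then for every $z^\star\in\mathcal S^\star$ and $m\ge0$, $$\min_{k=0,\dots,m}\|H\bar z^k-Hz^k\|^2\le\frac{\|z^0-z^\star\|^2}{\kappa(m+1)},\qquad \kappa=\bar\alpha\big(1+\tfrac{2\delta}{\gamma}-\bar\alpha\big).$$ Moreover, $(\bar z^k)$ is bounded with all limit points in $\operatorname{zer}T$, and if in addition $\gamma<\tfrac1L$ and $\mathcal S^\star=\operatorname{zer}T$, then $(z^k)$ and $(\bar z^k)$ converge to the same point of $\operatorname{zer}T$.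
   Context: $\operatorname{zer}T=\{z:0\in Tz\}$, $\operatorname{graph}T=\{(z,v):v\in Tz\}$. *)

theory Defs
  imports "HOL-Analysis.Analysis"
begin

definition graph_op :: "('a \<Rightarrow> 'b set) \<Rightarrow> ('a \<times> 'b) set" where
  "graph_op T = {(z, v). v \<in> T z}"

definition zer_op :: "('a \<Rightarrow> 'a::zero set) \<Rightarrow> 'a set" where
  "zer_op T = {z. 0 \<in> T z}"

definition monotone_op :: "('a::real_inner \<Rightarrow> 'a set) \<Rightarrow> bool" where
  "monotone_op A \<longleftrightarrow>
     (\<forall>(x, u) \<in> graph_op A. \<forall>(y, v) \<in> graph_op A. inner (u - v) (x - y) \<ge> 0)"

definition maximally_monotone :: "('a::real_inner \<Rightarrow> 'a set) \<Rightarrow> bool" where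
  "maximally_monotone A \<longleftrightarrow> monotone_op A \<and>
     (\<forall>x u. (\<forall>(y, v) \<in> graph_op A. inner (u - v) (x - y) \<ge> 0) \<longrightarrow> u \<in> A x)"

definition op_plus_fun :: "('a::plus \<Rightarrow> 'a set) \<Rightarrow> ('a \<Rightarrow> 'a) \<Rightarrow> 'a \<Rightarrow> 'a set" where
  "op_plus_fun A F z = (\<lambda>a. a + F z) ` A z"

end

theory Submission
  imports Defs
begin

(* With the residual d k = H (zb k) - H (z k), the weak Minty inequality at zb k and the
  nonexpansiveness of \<gamma>F (since \<gamma>L \<le> 1) combine to
  \<langle>-d k, z k - z*\<rangle> \<ge> (\<delta>/\<gamma> + 1/2) \<parallel>d k\<parallel>^2. The relaxed step z (k+1) = z k + \<alpha> d k then gives the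
  Fej\<acute>er inequality \<parallel>z (k+1) - z*\<parallel>^2 + \<kappa> \<parallel>d k\<parallel>^2 \<le> \<parallel>z k - z*\<parallel>^2, whose telescoped sum yields
  the rate and the summability of \<parallel>d k\<parallel>^2. As d k \<rightarrow> 0, the resolvent step produces elements
  of A (zb k) converging to -F x along any subsequence zb \<circ> r \<rightarrow> x, so x is a zero of A + F by
  closedness of the graph of a maximally monotone operator. When \<gamma>L < 1 also z k - zb k \<rightarrow> 0,
  and Fej\<acute>er monotonicity with respect to the whole zero set forces convergence. *)

lemma monotone_opD:
  assumes "monotone_op A" "u \<in> A x" "v \<in> A y"
  shows "0 \<le> inner (u - v) (x - y)"
  using assms unfolding monotone_op_def graph_op_def by fast

lemma zer_op_plus_fun_iff:
  fixes F :: "'a::group_add \<Rightarrow> 'a"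
  shows "x \<in> zer_op (op_plus_fun A F) \<longleftrightarrow> - F x \<in> A x"
  by (auto simp: zer_op_def op_plus_fun_def image_iff add_eq_0_iff2)

lemma graph_op_plus_funI: "u \<in> A x \<Longrightarrow> (x, u + F x) \<in> graph_op (op_plus_fun A F)"
  by (simp add: graph_op_def op_plus_fun_def)

lemma inner_diff_ge_half_norm_diff_sq:
  fixes w g :: "'a::real_inner"
  assumes "norm g \<le> norm w"
  shows "(norm (w - g))\<^sup>2 / 2 \<le> inner (w - g) w"
proof -
  have "inner (w - g) w - (norm (w - g))\<^sup>2 / 2 = ((norm w)\<^sup>2 - (norm g)\<^sup>2) / 2"
    by (simp add: power2_norm_eq_inner inner_diff inner_commute field_simps)
  moreover have "(norm g)\<^sup>2 \<le> (norm w)\<^sup>2" using assms by (simp add: power_mono)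
  ultimately show ?thesis by argo
qed

lemma relaxed_step_norm_sq_le:
  fixes x d s :: "'a::real_inner"
  assumes "0 < \<alpha>" "c * (norm d)\<^sup>2 \<le> inner (- d) (x - s)"
  shows "(norm (x + \<alpha> *\<^sub>R d - s))\<^sup>2 + \<alpha> * (2 * c - \<alpha>) * (norm d)\<^sup>2 \<le> (norm (x - s))\<^sup>2"
proof -
  have "inner (x - s) (\<alpha> *\<^sub>R d) =
      ((norm ((x - s) + \<alpha> *\<^sub>R d))\<^sup>2 - (norm (x - s))\<^sup>2 - (norm (\<alpha> *\<^sub>R d))\<^sup>2) / 2"
    by (rule dot_norm)
  hence "(norm (x + \<alpha> *\<^sub>R d - s))\<^sup>2 = (norm (x - s))\<^sup>2 - 2 * \<alpha> * inner (- d) (x - s) + \<alpha>\<^sup>2 * (norm d)\<^sup>2"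
    by (simp add: inner_commute[of d] power_mult_distrib algebra_simps)
  moreover have "\<alpha> * (c * (norm d)\<^sup>2) \<le> \<alpha> * inner (- d) (x - s)"
    using mult_left_mono[OF assms(2)] assms(1) by simp
  ultimately show ?thesis by (simp add: power2_eq_square algebra_simps)
qed

lemma Min_mult_card_le_sum:
  fixes f :: "'b \<Rightarrow> real"
  assumes "finite X" "X \<noteq> {}"
  shows "Min (f ` X) * card X \<le> sum f X"
proof -
  have "(\<Sum>_\<in>X. Min (f ` X)) \<le> sum f X" by (rule sum_mono) (simp add: assms)
  thus ?thesis by (simp add: mult.commute)
qed

lemma norm_le_if_inner_diff_nonneg:
  fixes p e :: "'a::real_inner"
  assumes "0 \<le> inner (p - e) e"
  shows "norm e \<le> norm p"
proof -
  have "norm e * norm e \<le> inner p e"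
    using assms by (simp add: inner_diff_left power2_norm_eq_inner[symmetric] power2_eq_square)
  also have "\<dots> \<le> norm p * norm e" by (rule norm_cauchy_schwarz)
  finally show ?thesis by (cases "norm e = 0") (auto simp: mult_le_cancel_right)
qed

lemma maximally_monotone_limit:
  fixes A :: "'a::real_inner \<Rightarrow> 'a set"
  assumes "maximally_monotone A" and "\<And>n. u n \<in> A (x n)"
    and "x \<longlonglongrightarrow> x0" and "u \<longlonglongrightarrow> u0"
  shows "u0 \<in> A x0"
proof -
  have "0 \<le> inner (u0 - v) (x0 - y)" if "(y, v) \<in> graph_op A" for y v
  proof (rule LIMSEQ_le_const)
    show "(\<lambda>n. inner (u n - v) (x n - y)) \<longlonglongrightarrow> inner (u0 - v) (x0 - y)"
      using assms(3,4) by (intro tendsto_intros)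
    show "\<exists>N. \<forall>n\<ge>N. 0 \<le> inner (u n - v) (x n - y)"
      using assms(1,2) that by (auto simp: maximally_monotone_def graph_op_def intro: monotone_opD)
  qed
  thus ?thesis using assms(1) unfolding maximally_monotone_def by blast
qed

lemma fejer_monotone_convergent:
  fixes z :: "nat \<Rightarrow> 'a::heine_borel"
  assumes "s \<in> S"
    and dist_mono: "\<And>s k n. s \<in> S \<Longrightarrow> k \<le> n \<Longrightarrow> dist (z n) s \<le> dist (z k) s"
    and limit_points: "\<And>x r. strict_mono r \<Longrightarrow> (z \<circ> r) \<longlonglongrightarrow> x \<Longrightarrow> x \<in> S"
  shows "\<exists>x\<in>S. z \<longlonglongrightarrow> x"
proof -
  have "range z \<subseteq> cball s (dist (z 0) s)"
    using dist_mono[OF assms(1)] by (auto simp: dist_commute)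
  hence "bounded (range z)" using bounded_cball bounded_subset by blast
  then obtain x r where r: "strict_mono r" and lim: "(z \<circ> r) \<longlonglongrightarrow> x"
    using bounded_imp_convergent_subsequence by blast
  have x: "x \<in> S" using limit_points[OF r lim] .
  have "z \<longlonglongrightarrow> x"
  proof (rule metric_LIMSEQ_I)
    fix e :: real assume "0 < e"
    then obtain N where "dist (z (r N)) x < e" using metric_LIMSEQ_D[OF lim] by (auto simp: o_def)
    hence "dist (z n) x < e" if "r N \<le> n" for n
      using dist_mono[OF x that] by simp
    thus "\<exists>N. \<forall>n\<ge>N. dist (z n) x < e" by blast
  qed
  with x show ?thesis by blast
qed

text \<open>Tseng's forward-backward-forward splitting with relaxation \<alpha>: with H = id - \<gamma>F,
  zb k is the resolvent step from z k and residual k below is H (zb k) - H (z k).\<close>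
locale relaxed_fbf =
  fixes A :: "'a::euclidean_space \<Rightarrow> 'a set" and F :: "'a \<Rightarrow> 'a"
    and L \<rho> \<delta> \<gamma> \<alpha> :: real and S :: "'a set" and z zb :: "nat \<Rightarrow> 'a"
  assumes A_mm: "maximally_monotone A"
    and F_lip: "L-lipschitz_on UNIV F"
    and S_sub: "S \<subseteq> zer_op (op_plus_fun A F)"
    and weak_mvi: "\<And>zs x v. zs \<in> S \<Longrightarrow> (x, v) \<in> graph_op (op_plus_fun A F) \<Longrightarrow>
                     \<rho> * (norm v)\<^sup>2 \<le> inner v (x - zs)"
    and \<gamma>_pos: "0 < \<gamma>" and \<gamma>L_le: "\<gamma> * L \<le> 1"
    and \<delta>_ub: "\<delta> \<le> \<rho>"
    and \<alpha>_pos: "0 < \<alpha>" and \<alpha>_ub: "\<alpha> < 1 + 2 * \<delta> / \<gamma>"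
    and zb_res: "\<And>k. (1 / \<gamma>) *\<^sub>R (z k - \<gamma> *\<^sub>R F (z k) - zb k) \<in> A (zb k)"
    and z_step: "\<And>k. z (Suc k) = z k + \<alpha> *\<^sub>R
                   ((zb k - \<gamma> *\<^sub>R F (zb k)) - (z k - \<gamma> *\<^sub>R F (z k)))"
begin

definition residual :: "nat \<Rightarrow> 'a" where
  "residual k = (zb k - \<gamma> *\<^sub>R F (zb k)) - (z k - \<gamma> *\<^sub>R F (z k))"

definition kappa :: real where
  "kappa = \<alpha> * (1 + 2 * \<delta> / \<gamma> - \<alpha>)"

definition resolvent_part :: "nat \<Rightarrow> 'a" where
  "resolvent_part k = (1 / \<gamma>) *\<^sub>R (z k - \<gamma> *\<^sub>R F (z k) - zb k)"

lemma kappa_pos: "0 < kappa"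
  using \<alpha>_pos \<alpha>_ub by (simp add: kappa_def)

lemma z_Suc: "z (Suc k) = z k + \<alpha> *\<^sub>R residual k"
  by (simp add: z_step residual_def)

lemma norm_F_diff_le: "norm (F x - F y) \<le> L * norm (x - y)"
  using lipschitz_onD[OF F_lip] by (simp add: dist_norm)

lemma L_nonneg: "0 \<le> L"
  using lipschitz_on_nonneg[OF F_lip] .

lemma norm_scaled_F_diff_le: "norm (\<gamma> *\<^sub>R (F x - F y)) \<le> norm (x - y)"
proof -
  have "norm (\<gamma> *\<^sub>R (F x - F y)) \<le> \<gamma> * (L * norm (x - y))"
    using norm_F_diff_le \<gamma>_pos by (simp add: mult_left_mono)
  also have "\<dots> \<le> norm (x - y)"
    using mult_right_mono[OF \<gamma>L_le norm_ge_zero] by (simp add: mult.assoc)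
  finally show ?thesis .
qed

lemma resolvent_part_mem: "resolvent_part k \<in> A (zb k)"
  using zb_res by (simp add: resolvent_part_def)

lemma A_mono: "monotone_op A"
  using A_mm by (simp add: maximally_monotone_def)

lemma residual_eq: "residual k = - \<gamma> *\<^sub>R (resolvent_part k + F (zb k))"
  using \<gamma>_pos by (simp add: residual_def resolvent_part_def algebra_simps)

text \<open>Split z k - zs at zb k: the weak Minty inequality controls the part zb k - zs, and
  nonexpansiveness of \<gamma>F (as \<gamma>L \<le> 1) controls the part z k - zb k.\<close>
lemma residual_descent:
  assumes "zs \<in> S"
  shows "(\<delta> / \<gamma> + 1 / 2) * (norm (residual k))\<^sup>2 \<le> inner (- residual k) (z k - zs)"
proof -
  let ?v = "resolvent_part k + F (zb k)"
  have norm_residual: "(norm (residual k))\<^sup>2 = \<gamma>\<^sup>2 * (norm ?v)\<^sup>2"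
    using \<gamma>_pos by (simp add: residual_eq power_mult_distrib)
  have "\<delta> / \<gamma> * (norm (residual k))\<^sup>2 = \<gamma> * (\<delta> * (norm ?v)\<^sup>2)"
    unfolding norm_residual using \<gamma>_pos by (simp add: power2_eq_square field_simps)
  also have "\<dots> \<le> \<gamma> * (\<rho> * (norm ?v)\<^sup>2)"
    using \<delta>_ub \<gamma>_pos by (simp add: mult_right_mono)
  also have "\<dots> \<le> \<gamma> * inner ?v (zb k - zs)"
    using weak_mvi[OF assms graph_op_plus_funI] resolvent_part_mem \<gamma>_pos by simp
  also have "\<dots> = inner (- residual k) (zb k - zs)"
    by (simp add: residual_eq)
  finally have at_zb: "\<delta> / \<gamma> * (norm (residual k))\<^sup>2 \<le> inner (- residual k) (zb k - zs)" .
  have "(z k - zb k) - \<gamma> *\<^sub>R (F (z k) - F (zb k)) = - residual k"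
    by (simp add: residual_def algebra_simps)
  hence at_z: "(norm (residual k))\<^sup>2 / 2 \<le> inner (- residual k) (z k - zb k)"
    using inner_diff_ge_half_norm_diff_sq[OF norm_scaled_F_diff_le, of "z k" "zb k"]
    by (metis norm_minus_cancel)
  have "inner (- residual k) (z k - zs) =
      inner (- residual k) (zb k - zs) + inner (- residual k) (z k - zb k)"
    by (simp add: inner_diff_right)
  with at_zb at_z show ?thesis by (simp add: algebra_simps)
qed

lemma fejer_step:
  assumes "zs \<in> S"
  shows "(norm (z (Suc k) - zs))\<^sup>2 + kappa * (norm (residual k))\<^sup>2 \<le> (norm (z k - zs))\<^sup>2"
  using relaxed_step_norm_sq_le[OF \<alpha>_pos residual_descent[OF assms]]
  by (simp add: z_Suc kappa_def algebra_simps)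

lemma dist_z_decreasing:
  assumes "zs \<in> S" "k \<le> n"
  shows "dist (z n) zs \<le> dist (z k) zs"
proof -
  have "norm (z (Suc j) - zs) \<le> norm (z j - zs)" for j
  proof (rule power2_le_imp_le)
    show "(norm (z (Suc j) - zs))\<^sup>2 \<le> (norm (z j - zs))\<^sup>2"
      using fejer_step[OF assms(1), of j] kappa_pos
      by (smt (verit) mult_nonneg_nonneg zero_le_power2)
  qed simp
  hence "decseq (\<lambda>j. dist (z j) zs)" by (intro decseq_SucI) (simp add: dist_norm)
  thus ?thesis using assms(2) by (simp add: decseq_def)
qed

lemma residual_sum_le:
  assumes "zs \<in> S"
  shows "kappa * (\<Sum>k<n. (norm (residual k))\<^sup>2) \<le> (norm (z 0 - zs))\<^sup>2"
proof -
  have "kappa * (\<Sum>k<n. (norm (residual k))\<^sup>2) + (norm (z n - zs))\<^sup>2 \<le> (norm (z 0 - zs))\<^sup>2"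
  proof (induction n)
    case (Suc n)
    then show ?case using fejer_step[OF assms, of n] by (simp add: algebra_simps)
  qed simp
  thus ?thesis by (smt (verit) zero_le_power2)
qed

lemma min_residual_le:
  assumes "zs \<in> S"
  shows "Min ((\<lambda>k. (norm (residual k))\<^sup>2) ` {0..m}) \<le> (norm (z 0 - zs))\<^sup>2 / (kappa * (real m + 1))"
proof -
  let ?M = "Min ((\<lambda>k. (norm (residual k))\<^sup>2) ` {0..m})"
  have "kappa * (?M * (real m + 1)) \<le> kappa * (\<Sum>k\<in>{0..m}. (norm (residual k))\<^sup>2)"
    using Min_mult_card_le_sum[of "{0..m}" "\<lambda>k. (norm (residual k))\<^sup>2"] kappa_pos
    by (simp add: add.commute)
  also have "\<dots> \<le> (norm (z 0 - zs))\<^sup>2"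
    using residual_sum_le[OF assms, of "Suc m"] by (simp add: lessThan_Suc_atMost atLeast0AtMost)
  finally show ?thesis using kappa_pos by (simp add: pos_le_divide_eq mult_ac)
qed

lemma residual_tendsto_zero:
  assumes "S \<noteq> {}"
  shows "residual \<longlonglongrightarrow> 0"
proof -
  obtain zs where zs: "zs \<in> S" using assms by blast
  have "(\<Sum>k<n. (norm (residual k))\<^sup>2) \<le> (norm (z 0 - zs))\<^sup>2 / kappa" for n
    using residual_sum_le[OF zs] kappa_pos by (simp add: pos_le_divide_eq mult.commute)
  hence "summable (\<lambda>k. (norm (residual k))\<^sup>2)"
    by (intro summableI_nonneg_bounded) auto
  hence "(\<lambda>k. (norm (residual k))\<^sup>2) \<longlonglongrightarrow> 0" by (rule summable_LIMSEQ_zero)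
  hence "(\<lambda>k. sqrt ((norm (residual k))\<^sup>2)) \<longlonglongrightarrow> sqrt 0" by (rule tendsto_real_sqrt)
  thus ?thesis by (simp add: tendsto_norm_zero_iff)
qed

text \<open>A zero zs of A + F is the resolvent image of H zs, and the resolvent of \<gamma>A is
  nonexpansive.\<close>
lemma norm_zb_diff_le:
  assumes "zs \<in> zer_op (op_plus_fun A F)"
  shows "norm (zb k - zs) \<le> (1 + \<gamma> * L) * norm (z k - zs)"
proof -
  let ?p = "(z k - zs) - \<gamma> *\<^sub>R (F (z k) - F zs)"
  have "?p - (zb k - zs) = \<gamma> *\<^sub>R (resolvent_part k - (- F zs))"
    using \<gamma>_pos by (simp add: resolvent_part_def algebra_simps)
  moreover have "0 \<le> inner (resolvent_part k - (- F zs)) (zb k - zs)"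
    using monotone_opD[OF A_mono resolvent_part_mem, of "- F zs" zs] assms
    by (simp add: zer_op_plus_fun_iff)
  ultimately have "norm (zb k - zs) \<le> norm ?p"
    using \<gamma>_pos by (intro norm_le_if_inner_diff_nonneg) simp
  also have "\<dots> \<le> norm (z k - zs) + \<gamma> * norm (F (z k) - F zs)"
    using norm_triangle_ineq4[of "z k - zs" "\<gamma> *\<^sub>R (F (z k) - F zs)"] \<gamma>_pos by simp
  also have "\<dots> \<le> norm (z k - zs) + \<gamma> * (L * norm (z k - zs))"
    using norm_F_diff_le \<gamma>_pos by (simp add: mult_left_mono)
  finally show ?thesis by (simp add: algebra_simps)
qed

lemma bounded_zb:
  assumes "S \<noteq> {}"
  shows "bounded (range zb)"
proof -
  obtain zs where zs: "zs \<in> S" using assms by blast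
  have "norm (zb k - zs) \<le> (1 + \<gamma> * L) * norm (z 0 - zs)" for k
  proof -
    have "norm (zb k - zs) \<le> (1 + \<gamma> * L) * norm (z k - zs)"
      using norm_zb_diff_le zs S_sub by blast
    also have "\<dots> \<le> (1 + \<gamma> * L) * norm (z 0 - zs)"
      using dist_z_decreasing[OF zs, of 0 k] \<gamma>_pos L_nonneg by (simp add: dist_norm mult_left_mono)
    finally show ?thesis .
  qed
  hence "range zb \<subseteq> cball zs ((1 + \<gamma> * L) * norm (z 0 - zs))"
    by (auto simp: dist_norm norm_minus_commute)
  thus ?thesis using bounded_cball bounded_subset by blast
qed

text \<open>Since the residual vanishes, resolvent_part (r j) \<in> A (zb (r j)) tends to - F x.\<close>
lemma limit_point_zb_in_zer:
  assumes "S \<noteq> {}" "strict_mono r" "(zb \<circ> r) \<longlonglongrightarrow> x"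
  shows "x \<in> zer_op (op_plus_fun A F)"
proof -
  have resolvent_part_eq: "resolvent_part k = - ((1 / \<gamma>) *\<^sub>R residual k) - F (zb k)" for k
    using \<gamma>_pos by (simp add: residual_eq)
  have "(\<lambda>j. residual (r j)) \<longlonglongrightarrow> 0"
    using LIMSEQ_subseq_LIMSEQ[OF residual_tendsto_zero[OF assms(1)] assms(2)] by (simp add: o_def)
  moreover have "(\<lambda>j. F (zb (r j))) \<longlonglongrightarrow> F x"
    using continuous_on_tendsto_compose[OF lipschitz_on_continuous_on[OF F_lip] assms(3)]
    by (simp add: o_def)
  ultimately have "(\<lambda>j. resolvent_part (r j)) \<longlonglongrightarrow> - ((1 / \<gamma>) *\<^sub>R 0) - F x"
    unfolding resolvent_part_eq by (intro tendsto_intros)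
  hence "- F x \<in> A x"
    using maximally_monotone_limit[OF A_mm resolvent_part_mem] assms(3) by (simp add: o_def)
  thus ?thesis by (simp add: zer_op_plus_fun_iff)
qed

lemma norm_z_diff_zb_le:
  assumes "\<gamma> * L < 1"
  shows "norm (z k - zb k) \<le> norm (residual k) / (1 - \<gamma> * L)"
proof -
  have "z k - zb k = \<gamma> *\<^sub>R (F (z k) - F (zb k)) - residual k"
    by (simp add: residual_def algebra_simps)
  hence "norm (z k - zb k) \<le> \<gamma> * norm (F (z k) - F (zb k)) + norm (residual k)"
    using norm_triangle_ineq4[of "\<gamma> *\<^sub>R (F (z k) - F (zb k))" "residual k"] \<gamma>_pos by simp
  also have "\<dots> \<le> \<gamma> * (L * norm (z k - zb k)) + norm (residual k)"
    using norm_F_diff_le \<gamma>_pos by (simp add: mult_left_mono)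
  finally show ?thesis using assms by (simp add: field_simps)
qed

lemma convergent_to_zero_of_sum:
  assumes "\<gamma> * L < 1" "S = zer_op (op_plus_fun A F)" "S \<noteq> {}"
  shows "\<exists>x \<in> zer_op (op_plus_fun A F). z \<longlonglongrightarrow> x \<and> zb \<longlonglongrightarrow> x"
proof -
  have "(\<lambda>k. norm (residual k) / (1 - \<gamma> * L)) \<longlonglongrightarrow> 0"
    using residual_tendsto_zero[OF assms(3)]
    by (intro tendsto_divide_zero) (simp add: tendsto_norm_zero_iff)
  hence z_zb: "(\<lambda>k. z k - zb k) \<longlonglongrightarrow> 0"
    by (rule Lim_null_comparison[rotated]) (simp add: norm_z_diff_zb_le[OF assms(1)])
  have limit_points: "x \<in> S" if "strict_mono r" "(z \<circ> r) \<longlonglongrightarrow> x" for r x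
  proof -
    have "(\<lambda>j. z (r j) - (z (r j) - zb (r j))) \<longlonglongrightarrow> x - 0"
      using that LIMSEQ_subseq_LIMSEQ[OF z_zb that(1)] by (intro tendsto_diff) (simp_all add: o_def)
    hence "(zb \<circ> r) \<longlonglongrightarrow> x" by (simp add: o_def)
    thus ?thesis using limit_point_zb_in_zer[OF assms(3) that(1)] assms(2) by simp
  qed
  obtain zs where "zs \<in> S" using assms(3) by blast
  then have "\<exists>x\<in>S. z \<longlonglongrightarrow> x"
    by (rule fejer_monotone_convergent) (auto intro: dist_z_decreasing limit_points)
  then obtain x where x: "x \<in> S" "z \<longlonglongrightarrow> x" by blast
  have "(\<lambda>k. z k - (z k - zb k)) \<longlonglongrightarrow> x - 0"
    using x(2) z_zb by (rule tendsto_diff)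
  with x assms(2) show ?thesis by auto
qed

end

theorem corollary3p2:
  fixes A :: "'a::euclidean_space \<Rightarrow> 'a set"
    and F :: "'a \<Rightarrow> 'a"
    and L \<rho> \<gamma> \<delta> \<alpha> :: real
    and S :: "'a set"
    and z zb :: "nat \<Rightarrow> 'a"
  assumes A_mm: "maximally_monotone A"
    and L_pos: "L > 0"
    and F_lip: "L-lipschitz_on UNIV F"
    and S_ne: "S \<noteq> {}"
    and S_sub: "S \<subseteq> zer_op (op_plus_fun A F)"
    and \<rho>_lb: "\<rho> > - 1 / (2 * L)"
    and weak_mvi: "\<And>zs zz v. zs \<in> S \<Longrightarrow> (zz, v) \<in> graph_op (op_plus_fun A F) \<Longrightarrow>
                     inner v (zz - zs) \<ge> \<rho> * (norm v)\<^sup>2"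
    and \<gamma>_lb: "\<gamma> > max 0 (- 2 * \<rho>)" and \<gamma>_ub: "\<gamma> \<le> 1 / L"
    and \<delta>_lb: "\<delta> > - \<gamma> / 2" and \<delta>_ub: "\<delta> \<le> \<rho>"
    and \<alpha>_lb: "\<alpha> > 0" and \<alpha>_ub: "\<alpha> < 1 + 2 * \<delta> / \<gamma>"
    and zb_res: "\<And>k. (1 / \<gamma>) *\<^sub>R (z k - \<gamma> *\<^sub>R F (z k) - zb k) \<in> A (zb k)"
    and z_step: "\<And>k. z (Suc k) = z k + \<alpha> *\<^sub>R
                   ((zb k - \<gamma> *\<^sub>R F (zb k)) - (z k - \<gamma> *\<^sub>R F (z k)))"
  shows "(\<forall>zs \<in> S. \<forall>m::nat.
            Min ((\<lambda>k. (norm ((zb k - \<gamma> *\<^sub>R F (zb k)) - (z k - \<gamma> *\<^sub>R F (z k))))\<^sup>2) ` {0..m})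
              \<le> (norm (z 0 - zs))\<^sup>2 / ((\<alpha> * (1 + 2 * \<delta> / \<gamma> - \<alpha>)) * (real m + 1)))
       \<and> bounded (range zb)
       \<and> (\<forall>x r. strict_mono r \<and> (zb \<circ> r) \<longlonglongrightarrow> x \<longrightarrow> x \<in> zer_op (op_plus_fun A F))
       \<and> (\<gamma> < 1 / L \<and> S = zer_op (op_plus_fun A F) \<longrightarrow>
            (\<exists>x \<in> zer_op (op_plus_fun A F). z \<longlonglongrightarrow> x \<and> zb \<longlonglongrightarrow> x))"
proof -
  have \<gamma>_pos: "0 < \<gamma>" using \<gamma>_lb by simp
  have \<gamma>L_le: "\<gamma> * L \<le> 1" using \<gamma>_ub L_pos by (simp add: field_simps)
  interpret relaxed_fbf A F L \<rho> \<delta> \<gamma> \<alpha> S z zb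
    by unfold_locales
      (use A_mm F_lip S_sub weak_mvi \<delta>_ub \<alpha>_lb \<alpha>_ub zb_res z_step \<gamma>_pos \<gamma>L_le in auto)
  have "\<gamma> * L < 1" if "\<gamma> < 1 / L" using that L_pos by (simp add: field_simps)
  with min_residual_le bounded_zb[OF S_ne] limit_point_zb_in_zer[OF S_ne]
    convergent_to_zero_of_sum[OF _ _ S_ne]
  show ?thesis unfolding residual_def kappa_def by blast
qed

end
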